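(* For any finite graph $G$ and any $\varepsilon>0$, the convexity space $\mathcal{C}(G)$ has weak $\varepsilon$-nets of size at most $(480/\varepsilon)^{8\nu_{\mathrm{bi}}(G)\log(1/\varepsilon)}$. In other words, for any set system $\mathcal{G}\subseteq\mathcal{C}(G)$, $$\tau(\mathcal{G})\le (480\,\tau^*(\mathcal{G}))^{8\nu_{\mathrm{bi}}(G)\log\tau^*(\mathcal{G})}.$$
   Context: Let $X=\mathrm{MIS}(G)$ be the set of maximal independent sets of $G$; for $S\subseteq V(G)$ let $K_S=\{I\in X: S\subseteq I\}$; $\mathcal{C}(G)=\{K_S: S\subseteq V(G)\}$. Given a finitely supported probability measure $\mu$ on $X$, a set $N\subseteq X$ is a weak $\varepsilon$-net for $\mathcal{C}(G)$ with respect to $\mu$ if $N\cap C\ne\emptyset$ for every $C\in\mathcal{C}(G)$ with $\mu(C)\ge\varepsilon$; $\mathcal{C}(G)$ has weak $\varepsilon$-nets of size $m$ if for every finitely supported probability measure $\mu$ on $X$ there is such a net of size at most $m$. $\tau(\mathcal{G})$ is the minimum size of a set $T\subseteq X$ meeting every member of $\mathcal{G}$; $\tau^*(\mathcal{G})$ is the minimum of $\sum_{x\in X}f(x)$ over functions $f:X\to[0,1]$ with $\sum_{x\in A}f(x)\ge1$ for all $A\in\mathcal{G}$. $\nu_{\mathrm{bi}}(G)$ is the largest $t$ such that $G$ has $2t$ distinct vertices $u_1,\dots,u_t,v_1,\dots,v_t$ with $u_iv_j\in E(G)$ iff $i=j$. Logarithms are natural. *)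

theory Defs
  imports Complex_Main
begin

definition finite_graph :: "'a set \<Rightarrow> ('a \<Rightarrow> 'a \<Rightarrow> bool) \<Rightarrow> bool" where
  "finite_graph V E \<longleftrightarrow> finite V \<and> (\<forall>x y. E x y \<longrightarrow> x \<in> V \<and> y \<in> V)
     \<and> (\<forall>x y. E x y \<longrightarrow> E y x) \<and> (\<forall>x. \<not> E x x)"

definition independent :: "'a set \<Rightarrow> ('a \<Rightarrow> 'a \<Rightarrow> bool) \<Rightarrow> 'a set \<Rightarrow> bool" where
  "independent V E I \<longleftrightarrow> I \<subseteq> V \<and> (\<forall>x\<in>I. \<forall>y\<in>I. \<not> E x y)"

definition MIS :: "'a set \<Rightarrow> ('a \<Rightarrow> 'a \<Rightarrow> bool) \<Rightarrow> 'a set set" where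
  "MIS V E = {I. independent V E I \<and> (\<forall>J. independent V E J \<and> I \<subseteq> J \<longrightarrow> J = I)}"

definition Kset :: "'a set \<Rightarrow> ('a \<Rightarrow> 'a \<Rightarrow> bool) \<Rightarrow> 'a set \<Rightarrow> 'a set set" where
  "Kset V E S = {I \<in> MIS V E. S \<subseteq> I}"

definition convex_space :: "'a set \<Rightarrow> ('a \<Rightarrow> 'a \<Rightarrow> bool) \<Rightarrow> 'a set set set" where
  "convex_space V E = {Kset V E S | S. S \<subseteq> V}"

definition fin_prob :: "'b set \<Rightarrow> ('b \<Rightarrow> real) \<Rightarrow> bool" where
  "fin_prob X \<mu> \<longleftrightarrow> (\<forall>x. 0 \<le> \<mu> x) \<and> finite {x. \<mu> x \<noteq> 0}
     \<and> {x. \<mu> x \<noteq> 0} \<subseteq> X \<and> (\<Sum>x\<in>{x. \<mu> x \<noteq> 0}. \<mu> x) = 1"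

definition meas :: "('b \<Rightarrow> real) \<Rightarrow> 'b set \<Rightarrow> real" where
  "meas \<mu> C = (\<Sum>x\<in>C \<inter> {x. \<mu> x \<noteq> 0}. \<mu> x)"

definition weak_eps_net :: "'b set \<Rightarrow> 'b set set \<Rightarrow> ('b \<Rightarrow> real) \<Rightarrow> real \<Rightarrow> 'b set \<Rightarrow> bool" where
  "weak_eps_net X F \<mu> \<epsilon> N \<longleftrightarrow> N \<subseteq> X \<and> (\<forall>C\<in>F. meas \<mu> C \<ge> \<epsilon> \<longrightarrow> N \<inter> C \<noteq> {})"

definition has_weak_eps_nets :: "'b set \<Rightarrow> 'b set set \<Rightarrow> real \<Rightarrow> real \<Rightarrow> bool" where
  "has_weak_eps_nets X F \<epsilon> m \<longleftrightarrow>
     (\<forall>\<mu>. fin_prob X \<mu> \<longrightarrow> (\<exists>N. finite N \<and> real (card N) \<le> m \<and> weak_eps_net X F \<mu> \<epsilon> N))"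

definition bi_witness :: "'a set \<Rightarrow> ('a \<Rightarrow> 'a \<Rightarrow> bool) \<Rightarrow> nat \<Rightarrow> bool" where
  "bi_witness V E t \<longleftrightarrow> (\<exists>u v :: nat \<Rightarrow> 'a.
     u ` {..<t} \<subseteq> V \<and> v ` {..<t} \<subseteq> V \<and>
     inj_on u {..<t} \<and> inj_on v {..<t} \<and> (\<forall>i<t. \<forall>j<t. u i \<noteq> v j) \<and>
     (\<forall>i<t. \<forall>j<t. E (u i) (v j) \<longleftrightarrow> i = j))"

definition nu_bi :: "'a set \<Rightarrow> ('a \<Rightarrow> 'a \<Rightarrow> bool) \<Rightarrow> nat" where
  "nu_bi V E = (GREATEST t. bi_witness V E t)"

end

theory Submission
  imports Defs "HOL-Analysis.Harmonic_Numbers"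
begin

text \<open>Fix a finitely supported probability measure \<open>\<mu>\<close> on \<open>MIS(G)\<close> and a subfamily \<open>Y\<close>.
  Call a vertex heavy if it lies in more than half of \<open>Y\<close> (by \<open>\<mu>\<close>-mass). Two heavy vertices
  lie in a common member of \<open>Y\<close>, so the heavy vertices are independent and one maximal
  independent set \<open>J\<^sub>0\<close> contains them all; \<open>J\<^sub>0\<close> hits \<open>K\<^sub>S\<close> whenever \<open>S\<close> consists of heavy
  vertices. Otherwise \<open>S\<close> contains a light vertex \<open>x\<close>, and \<open>K\<^sub>S \<inter> Y\<close> lies in the family of
  members of \<open>Y\<close> containing \<open>x\<close>, which has at most half the mass of \<open>Y\<close>. Recursing to depth
  \<open>m \<approx> log\<^sub>2 (1/\<epsilon>)\<close> gives a tree of nets. To bound the branching, the light vertices are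
  replaced by a maximal set \<open>R\<close> of representatives that are pairwise \<open>\<delta>\<close>-separated in the
  symmetric-difference pseudometric, at a loss of \<open>\<delta> = \<epsilon>/(2m)\<close> of mass per level.
  Such an \<open>R\<close> is small: a greedily chosen sample \<open>P\<close> of \<open>O(log |R| / \<delta>)\<close> maximal independent
  sets separates all pairs of \<open>R\<close>, so the traces \<open>{J \<in> P. r \<in> J}\<close> are distinct; if they
  shattered \<open>\<nu>\<^sub>b\<^sub>i(G) + 2\<close> members of \<open>P\<close>, these would produce a too large induced matching, and
  the Sauer--Shelah lemma gives \<open>|R| \<le> (5/\<delta>)\<^bsup>2(\<nu>\<^sub>b\<^sub>i(G)+1)\<^esup>\<close>.\<close>

section \<open>Maximal independent sets and induced matchings\<close>

lemma MIS_subset: "J \<in> MIS V E \<Longrightarrow> J \<subseteq> V"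
  by (simp add: MIS_def independent_def)

lemma MIS_no_edge: "J \<in> MIS V E \<Longrightarrow> x \<in> J \<Longrightarrow> y \<in> J \<Longrightarrow> \<not> E x y"
  by (simp add: MIS_def independent_def)

lemma Kset_subset_MIS: "Kset V E S \<subseteq> MIS V E"
  by (auto simp: Kset_def)

locale finite_simple_graph =
  fixes V :: "'a set" and E :: "'a \<Rightarrow> 'a \<Rightarrow> bool"
  assumes finite_graph: "finite_graph V E"
begin

lemma finite_vertices: "finite V"
  and edge_sym: "E x y \<Longrightarrow> E y x"
  and edge_irrefl: "\<not> E x x"
  and edge_vertices: "E x y \<Longrightarrow> x \<in> V \<and> y \<in> V"
  using finite_graph by (auto simp: finite_graph_def)

lemma independent_extends_to_MIS:
  assumes "independent V E A"
  obtains J where "J \<in> MIS V E" "A \<subseteq> J"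
proof -
  let ?C = "{J. independent V E J \<and> A \<subseteq> J}"
  have "finite ?C"
    by (rule finite_subset[of _ "Pow V"]) (use finite_vertices in \<open>auto simp: independent_def\<close>)
  then obtain J where J: "J \<in> ?C" and max: "\<forall>K\<in>?C. J \<le> K \<longrightarrow> J = K"
    using finite_has_maximal[of ?C] assms by blast
  have "J \<in> MIS V E"
    unfolding MIS_def using J max by blast
  with J that show ?thesis
    by blast
qed

lemma MIS_has_neighbour:
  assumes J: "J \<in> MIS V E" and "x \<in> V" "x \<notin> J"
  obtains y where "y \<in> J" "E x y"
proof (rule ccontr)
  assume "\<not> thesis"
  with that have "\<forall>y\<in>J. \<not> E x y"
    by blast
  then have "independent V E (insert x J)"
    using assms MIS_subset[OF J] MIS_no_edge[OF J] edge_irrefl edge_sym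
    unfolding independent_def by blast
  with J have "insert x J = J"
    unfolding MIS_def by blast
  with \<open>x \<notin> J\<close> show False
    by blast
qed

lemma bi_witness_le_nu_bi:
  assumes "bi_witness V E t"
  shows "t \<le> nu_bi V E"
  unfolding nu_bi_def
proof (rule Greatest_le_nat[where b = "card V"])
  show "bi_witness V E t"
    by fact
next
  fix s assume "bi_witness V E s"
  then have "\<exists>u. u ` {..<s} \<subseteq> V \<and> inj_on u {..<s}"
    unfolding bi_witness_def by (elim exE conjE) (intro exI conjI)
  then obtain u where u: "u ` {..<s} \<subseteq> V" "inj_on u {..<s}"
    by (elim exE conjE)
  have "card (u ` {..<s}) \<le> card V"
    by (rule card_mono[OF finite_vertices u(1)])
  then show "s \<le> card V"
    using card_image[OF u(2)] by simp
qed

lemma nu_bi_eq_0_imp_MIS_eq: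
  assumes "nu_bi V E = 0"
  shows "MIS V E = {V}"
proof -
  have no_edge: "\<not> E a b" for a b
  proof
    assume ab: "E a b"
    have "bi_witness V E 1"
      unfolding bi_witness_def
      by (rule exI[of _ "\<lambda>_. a"], rule exI[of _ "\<lambda>_. b"])
         (use ab edge_vertices[OF ab] edge_irrefl[of a] in \<open>auto simp: inj_on_def\<close>)
    with assms show False
      using bi_witness_le_nu_bi by fastforce
  qed
  then have "independent V E V"
    by (simp add: independent_def)
  then show ?thesis
    unfolding MIS_def independent_def by blast
qed

text \<open>Choose a neighbour \<open>v i \<in> J i\<close> of each \<open>x i\<close>. At least three indices are needed to
  make all the \<open>x i\<close> and \<open>v j\<close> distinct.\<close>
lemma bi_witness_of_MIS_pattern:
  fixes x :: "nat \<Rightarrow> 'a" and J :: "nat \<Rightarrow> 'a set"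
  assumes t: "t \<ge> 3" and J: "\<And>i. i < t \<Longrightarrow> J i \<in> MIS V E"
    and pattern: "\<And>i j. i < t \<Longrightarrow> j < t \<Longrightarrow> x i \<in> J j \<longleftrightarrow> i \<noteq> j"
  shows "bi_witness V E t"
proof -
  have other_index: "\<exists>k<t. k \<noteq> i \<and> k \<noteq> j" for i j
  proof -
    have "card {i, j} \<le> 2"
      by (cases "i = j") auto
    then have "\<not> {..<t} \<subseteq> {i, j}"
      using card_mono[of "{i, j}" "{..<t}"] t by auto
    then show ?thesis
      by auto
  qed
  have x_vertex: "x i \<in> V" if "i < t" for i
    using other_index[of i i] pattern[OF that] J MIS_subset by blast
  define v where "v i = (SOME y. y \<in> J i \<and> E (x i) y)" for i
  have v: "v i \<in> J i \<and> E (x i) (v i)" if i: "i < t" for i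
  proof -
    obtain y where "y \<in> J i" "E (x i) y"
      using MIS_has_neighbour[OF J[OF i] x_vertex[OF i]] pattern[OF i i] by blast
    then show ?thesis
      unfolding v_def using someI[of "\<lambda>y. y \<in> J i \<and> E (x i) y" y] by blast
  qed
  have matching: "E (x i) (v j) \<longleftrightarrow> i = j" if "i < t" "j < t" for i j
    using v[OF that(2)] pattern[OF that] MIS_no_edge[OF J[OF that(2)]] by blast
  have "x i \<noteq> v j" if ij: "i < t" "j < t" for i j
  proof
    assume eq: "x i = v j"
    obtain k where k: "k < t" "k \<noteq> i" "k \<noteq> j"
      using other_index by blast
    have "x i \<in> J k" "x j \<in> J k"
      using pattern k ij by auto
    moreover have "E (x j) (x i)"
      using eq v[OF ij(2)] by simp
    ultimately show False
      using MIS_no_edge[OF J[OF k(1)]] by blast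
  qed
  moreover have "inj_on x {..<t}"
    by (rule inj_onI) (metis lessThan_iff pattern)
  moreover have "inj_on v {..<t}"
    by (rule inj_onI) (metis lessThan_iff matching)
  moreover have "v i \<in> V" if "i < t" for i
    using v[OF that] MIS_subset[OF J[OF that]] by blast
  ultimately show ?thesis
    unfolding bi_witness_def using x_vertex matching by (intro exI[of _ x] exI[of _ v]) auto
qed

lemma bi_witness_if_co_singletons_cut_out:
  assumes Q: "Q \<subseteq> MIS V E" "finite Q" "3 \<le> card Q"
    and co_singletons: "\<And>J. J \<in> Q \<Longrightarrow> \<exists>x. {K\<in>Q. x \<in> K} = Q - {J}"
  shows "bi_witness V E (card Q)"
proof -
  obtain q where q: "bij_betw q {0..<card Q} Q"
    using ex_bij_betw_nat_finite[OF Q(2)] by (elim exE)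
  then have q: "bij_betw q {..<card Q} Q"
    by (simp add: atLeast0LessThan)
  define x where "x i = (SOME x. {K\<in>Q. x \<in> K} = Q - {q i})" for i
  have x: "{K\<in>Q. x i \<in> K} = Q - {q i}" if "i < card Q" for i
  proof -
    have "q i \<in> Q"
      using q that by (auto simp: bij_betw_def)
    then show ?thesis
      unfolding x_def by (rule someI_ex[OF co_singletons])
  qed
  show ?thesis
  proof (rule bi_witness_of_MIS_pattern[OF Q(3)])
    show "q j \<in> MIS V E" if "j < card Q" for j
      using q that Q(1) by (auto simp: bij_betw_def)
    show "x i \<in> q j \<longleftrightarrow> i \<noteq> j" if "i < card Q" "j < card Q" for i j
    proof -
      have "q j \<in> Q" "q j = q i \<longleftrightarrow> j = i"
        using q that by (auto simp: bij_betw_def inj_on_def)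
      then have "x i \<in> q j \<longleftrightarrow> q j \<in> Q - {q i}"
        by (simp flip: x[OF that(1)])
      also have "\<dots> \<longleftrightarrow> i \<noteq> j"
        using \<open>q j \<in> Q\<close> \<open>q j = q i \<longleftrightarrow> j = i\<close> by auto
      finally show ?thesis .
    qed
  qed
qed

end

section \<open>Finitely supported measures and greedy choices\<close>

lemma meas_nonneg: "(\<And>x. 0 \<le> \<mu> x) \<Longrightarrow> 0 \<le> meas \<mu> C"
  unfolding meas_def by (simp add: sum_nonneg)

lemma meas_mono:
  "(\<And>x. 0 \<le> \<mu> x) \<Longrightarrow> finite {x. \<mu> x \<noteq> 0} \<Longrightarrow> A \<subseteq> B \<Longrightarrow> meas \<mu> A \<le> meas \<mu> B"
  unfolding meas_def by (rule sum_mono2) auto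

lemma meas_Un_Int:
  assumes "finite {x. \<mu> x \<noteq> 0}"
  shows "meas \<mu> (A \<union> B) + meas \<mu> (A \<inter> B) = meas \<mu> A + meas \<mu> B"
proof -
  let ?S = "{x. \<mu> x \<noteq> 0}"
  have "sum \<mu> (A \<inter> ?S \<union> B \<inter> ?S) + sum \<mu> (A \<inter> ?S \<inter> (B \<inter> ?S))
      = sum \<mu> (A \<inter> ?S) + sum \<mu> (B \<inter> ?S)"
    using assms by (intro sum.union_inter) auto
  moreover have "A \<inter> ?S \<union> B \<inter> ?S = (A \<union> B) \<inter> ?S" "A \<inter> ?S \<inter> (B \<inter> ?S) = (A \<inter> B) \<inter> ?S"
    by auto
  ultimately show ?thesis
    unfolding meas_def by simp
qed

lemma meas_Un_le:
  assumes "\<And>x. 0 \<le> \<mu> x" "finite {x. \<mu> x \<noteq> 0}"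
  shows "meas \<mu> (A \<union> B) \<le> meas \<mu> A + meas \<mu> B"
  using meas_Un_Int[OF assms(2), of A B] meas_nonneg[of \<mu> "A \<inter> B", OF assms(1)] by linarith

lemma meas_pos_imp_in_support:
  assumes "0 < meas \<mu> C"
  shows "\<exists>x\<in>C. \<mu> x \<noteq> 0"
proof (rule ccontr)
  assume "\<not> ?thesis"
  then have "C \<inter> {x. \<mu> x \<noteq> 0} = {}"
    by blast
  with assms show False
    by (simp add: meas_def)
qed

lemma fin_prob_meas_eq_1: "fin_prob X \<mu> \<Longrightarrow> meas \<mu> X = 1"
  unfolding fin_prob_def meas_def by (simp add: Int_absorb1)

lemma fin_prob_meas_le_1:
  assumes "fin_prob X \<mu>"
  shows "meas \<mu> C \<le> 1"
proof -
  have "meas \<mu> C \<le> meas \<mu> UNIV"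
    using assms by (intro meas_mono) (auto simp: fin_prob_def)
  also have "\<dots> = 1"
    using assms by (simp add: meas_def fin_prob_def)
  finally show ?thesis .
qed

lemma weak_eps_net_empty:
  assumes "fin_prob X \<mu>" "1 < \<epsilon>"
  shows "weak_eps_net X F \<mu> \<epsilon> {}"
proof -
  have "\<not> \<epsilon> \<le> meas \<mu> C" for C
    using fin_prob_meas_le_1[OF assms(1), of C] assms(2) by linarith
  then show ?thesis
    unfolding weak_eps_net_def by blast
qed

lemma exists_point_in_many:
  fixes D :: "'i \<Rightarrow> 'b set" and \<delta> :: real
  assumes \<mu>: "fin_prob X \<mu>" and I: "finite I" "I \<noteq> {}" and big: "\<forall>i\<in>I. \<delta> < meas \<mu> (D i)"
  obtains p where "\<mu> p \<noteq> 0" "\<delta> * card I \<le> card {i\<in>I. p \<in> D i}"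
proof -
  let ?S = "{x. \<mu> x \<noteq> 0}" and ?c = "\<lambda>p. real (card {i\<in>I. p \<in> D i})"
  have finite_S: "finite ?S" and nonneg: "\<And>x. 0 \<le> \<mu> x" and sum_1: "sum \<mu> ?S = 1"
    using \<mu> by (auto simp: fin_prob_def)
  have count: "?c p = (\<Sum>i\<in>I. if p \<in> D i then 1 else 0)" for p
  proof -
    have "(\<Sum>i\<in>I. if p \<in> D i then 1 else 0) = real (card (I \<inter> {i. p \<in> D i}))"
      using I(1) by (simp add: sum.If_cases)
    moreover have "I \<inter> {i. p \<in> D i} = {i\<in>I. p \<in> D i}"
      by blast
    ultimately show ?thesis
      by simp
  qed
  have meas_as_sum: "(\<Sum>p\<in>?S. \<mu> p * (if p \<in> D i then 1 else 0)) = meas \<mu> (D i)" for i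
  proof -
    have "(\<Sum>p\<in>?S. \<mu> p * (if p \<in> D i then 1 else 0)) = (\<Sum>p\<in>?S. if p \<in> D i then \<mu> p else 0)"
      by (rule sum.cong) auto
    also have "\<dots> = sum \<mu> (?S \<inter> D i)"
      using finite_S by (simp add: sum.If_cases Int_def)
    finally show ?thesis
      unfolding meas_def by (simp add: Int_commute)
  qed
  have "\<delta> * card I = (\<Sum>i\<in>I. \<delta>)"
    by simp
  also have "\<dots> < (\<Sum>i\<in>I. meas \<mu> (D i))"
    using I big by (intro sum_strict_mono) auto
  also have "\<dots> = (\<Sum>i\<in>I. \<Sum>p\<in>?S. \<mu> p * (if p \<in> D i then 1 else 0))"
    by (simp add: meas_as_sum)
  also have "\<dots> = (\<Sum>p\<in>?S. \<Sum>i\<in>I. \<mu> p * (if p \<in> D i then 1 else 0))"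
    by (rule sum.swap)
  also have "\<dots> = (\<Sum>p\<in>?S. ?c p * \<mu> p)"
    by (simp add: count sum_distrib_left mult.commute)
  finally have lt: "\<delta> * card I < (\<Sum>p\<in>?S. ?c p * \<mu> p)" .
  have "\<exists>p\<in>?S. \<delta> * card I \<le> ?c p"
  proof (rule ccontr)
    assume "\<not> ?thesis"
    then have "\<forall>p\<in>?S. ?c p < \<delta> * card I"
      by (auto simp: not_le)
    then have "(\<Sum>p\<in>?S. ?c p * \<mu> p) \<le> (\<Sum>p\<in>?S. \<delta> * card I * \<mu> p)"
      using nonneg by (intro sum_mono mult_right_mono) (auto simp: less_imp_le)
    also have "\<dots> = \<delta> * card I"
      using sum_1 by (simp add: sum_distrib_left[symmetric])
    finally show False
      using lt by simp
  qed
  then show ?thesis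
    using that by blast
qed

text \<open>Each point chosen by \<open>exists_point_in_many\<close> hits a \<open>\<delta>\<close>-fraction of the sets not hit
  so far.\<close>
lemma greedy_hitting_set:
  fixes D :: "'i \<Rightarrow> 'b set" and \<delta> :: real
  assumes \<mu>: "fin_prob X \<mu>" and "\<delta> \<le> 1"
  shows "finite I \<Longrightarrow> \<forall>i\<in>I. \<delta> < meas \<mu> (D i) \<Longrightarrow> card I * (1 - \<delta>) ^ k < 1 \<Longrightarrow>
    \<exists>P \<subseteq> {x. \<mu> x \<noteq> 0}. card P \<le> k \<and> (\<forall>i\<in>I. P \<inter> D i \<noteq> {})"
proof (induction k arbitrary: I)
  case 0
  then show ?case
    by auto
next
  case (Suc k)
  show ?case
  proof (cases "I = {}")
    case True
    then show ?thesis
      by auto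
  next
    case False
    obtain p where p: "\<mu> p \<noteq> 0" "\<delta> * card I \<le> card {i\<in>I. p \<in> D i}"
      using exists_point_in_many[OF \<mu> Suc.prems(1) False Suc.prems(2)] .
    let ?I' = "{i\<in>I. p \<notin> D i}"
    have split: "?I' \<union> {i\<in>I. p \<in> D i} = I"
      by blast
    have "card I = card ?I' + card {i\<in>I. p \<in> D i}"
      using card_Un_disjoint[of ?I' "{i\<in>I. p \<in> D i}"] Suc.prems(1) unfolding split by auto
    with p(2) have "card ?I' \<le> (1 - \<delta>) * card I"
      by (simp add: algebra_simps)
    then have "card ?I' * (1 - \<delta>) ^ k \<le> (1 - \<delta>) * card I * (1 - \<delta>) ^ k"
      using assms(2) by (intro mult_right_mono) auto
    also have "\<dots> < 1"
      using Suc.prems(3) by (simp add: mult.assoc mult.left_commute)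
    finally have "card ?I' * (1 - \<delta>) ^ k < 1" .
    then have "\<exists>P \<subseteq> {x. \<mu> x \<noteq> 0}. card P \<le> k \<and> (\<forall>i\<in>?I'. P \<inter> D i \<noteq> {})"
      using Suc.prems(1,2) by (intro Suc.IH) auto
    then obtain P where P: "P \<subseteq> {x. \<mu> x \<noteq> 0}" "card P \<le> k" "\<forall>i\<in>?I'. P \<inter> D i \<noteq> {}"
      by (elim exE conjE) blast
    have "finite P"
      using P(1) \<mu> finite_subset by (auto simp: fin_prob_def)
    then have "card (insert p P) \<le> Suc k"
      using P(2) by (simp add: card_insert_if)
    then show ?thesis
      using P(1,3) p(1) by (intro exI[of _ "insert p P"]) auto
  qed
qed

lemma greedy_dominating_subset:
  assumes "finite C" "\<And>c. c \<in> C \<Longrightarrow> dominates c c"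
  obtains R where "R \<subseteq> C" "\<forall>c\<in>C. \<exists>r\<in>R. dominates c r"
    "\<forall>r\<in>R. \<forall>r'\<in>R. r \<noteq> r' \<longrightarrow> \<not> dominates r r' \<or> \<not> dominates r' r"
proof -
  have "\<exists>R\<subseteq>C. (\<forall>c\<in>C. \<exists>r\<in>R. dominates c r) \<and>
    (\<forall>r\<in>R. \<forall>r'\<in>R. r \<noteq> r' \<longrightarrow> \<not> dominates r r' \<or> \<not> dominates r' r)"
    using assms
  proof (induction "card C" arbitrary: C rule: less_induct)
    case less
    show ?case
    proof (cases "C = {}")
      case True
      then show ?thesis by auto
    next
      case False
      then obtain r where r: "r \<in> C" by auto
      let ?C' = "{c\<in>C. \<not> dominates c r}"
      have "?C' \<subset> C"
        using r less.prems(2) by auto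
      then have "card ?C' < card C"
        using less.prems(1) by (rule psubset_card_mono[rotated])
      moreover have "finite ?C'"
        using less.prems(1) by simp
      moreover have "dominates c c" if "c \<in> ?C'" for c
        using less.prems(2) that by simp
      ultimately have "\<exists>R'\<subseteq>?C'. (\<forall>c\<in>?C'. \<exists>r\<in>R'. dominates c r) \<and>
          (\<forall>r\<in>R'. \<forall>r'\<in>R'. r \<noteq> r' \<longrightarrow> \<not> dominates r r' \<or> \<not> dominates r' r)"
        by (rule less.hyps)
      then obtain R' where R': "R' \<subseteq> ?C'" "\<forall>c\<in>?C'. \<exists>r\<in>R'. dominates c r"
        "\<forall>r\<in>R'. \<forall>r'\<in>R'. r \<noteq> r' \<longrightarrow> \<not> dominates r r' \<or> \<not> dominates r' r"
        by (elim exE conjE) blast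
      have "insert r R' \<subseteq> C"
        using R'(1) r by blast
      moreover have "\<forall>c\<in>C. \<exists>r'\<in>insert r R'. dominates c r'"
        using R'(2) by blast
      moreover have "\<forall>r1\<in>insert r R'. \<forall>r2\<in>insert r R'. r1 \<noteq> r2 \<longrightarrow> \<not> dominates r1 r2 \<or> \<not> dominates r2 r1"
        using R'(1,3) by blast
      ultimately show ?thesis
        by blast
    qed
  qed
  then show ?thesis
  proof (elim exE conjE)
    fix R assume "R \<subseteq> C" "\<forall>c\<in>C. \<exists>r\<in>R. dominates c r"
      "\<forall>r\<in>R. \<forall>r'\<in>R. r \<noteq> r' \<longrightarrow> \<not> dominates r r' \<or> \<not> dominates r' r"
    then show ?thesis
      by (rule that)
  qed
qed

section \<open>The Sauer--Shelah lemma\<close>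

definition shatters :: "'b set set \<Rightarrow> 'b set \<Rightarrow> bool" where
  "shatters FF Q \<longleftrightarrow> (\<forall>A\<subseteq>Q. \<exists>F\<in>FF. F \<inter> Q = A)"

lemma shatters_subset:
  assumes "shatters FF Q" "Q' \<subseteq> Q"
  shows "shatters FF Q'"
  unfolding shatters_def
proof (intro allI impI)
  fix A assume "A \<subseteq> Q'"
  with assms(2) have "A \<subseteq> Q"
    by (rule order_trans[rotated])
  then obtain F where "F \<in> FF" "F \<inter> Q = A"
    using assms(1) unfolding shatters_def by blast
  then show "\<exists>F\<in>FF. F \<inter> Q' = A"
    using assms(2) \<open>A \<subseteq> Q'\<close> by blast
qed

lemma card_eq_card_Diff_image_add_card_pairs:
  assumes "finite FF"
  shows "card FF = card ((\<lambda>F. F - {a}) ` FF) + card {G\<in>FF. a \<notin> G \<and> insert a G \<in> FF}"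
proof -
  let ?f = "\<lambda>F. F - {a}" and ?Fa = "{F\<in>FF. a \<in> F}" and ?Fn = "{F\<in>FF. a \<notin> F}"
  have "?f ` ?Fn = ?Fn"
    by (auto simp: image_iff)
  then have image: "?f ` FF = ?Fn \<union> ?f ` ?Fa"
    by blast
  have pairs: "?Fn \<inter> ?f ` ?Fa = {G\<in>FF. a \<notin> G \<and> insert a G \<in> FF}"
  proof (intro equalityI subsetI)
    fix G assume "G \<in> ?Fn \<inter> ?f ` ?Fa"
    then show "G \<in> {G\<in>FF. a \<notin> G \<and> insert a G \<in> FF}"
      by (auto simp: insert_absorb)
  next
    fix G assume G: "G \<in> {G\<in>FF. a \<notin> G \<and> insert a G \<in> FF}"
    then have "G = ?f (insert a G)"
      by simp
    with G show "G \<in> ?Fn \<inter> ?f ` ?Fa"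
      by (intro IntI) (auto intro: rev_image_eqI[of "insert a G"])
  qed
  have "inj_on ?f ?Fa"
    by (rule inj_onI) (metis insert_Diff mem_Collect_eq)
  then have "card ?Fa = card (?f ` ?Fa)"
    by (simp add: card_image)
  moreover have "card FF = card (?Fn \<union> ?Fa)"
    by (rule arg_cong[where f = card]) blast
  ultimately have "card FF = card ?Fn + card (?f ` ?Fa)"
    using assms by (simp add: card_Un_disjoint disjoint_iff)
  also have "\<dots> = card (?f ` FF) + card {G\<in>FF. a \<notin> G \<and> insert a G \<in> FF}"
    unfolding image pairs[symmetric] using assms by (intro card_Un_Int) auto
  finally show ?thesis .
qed

lemma shatters_if_shatters_Diff_image:
  assumes "a \<notin> Q" "shatters ((\<lambda>F. F - {a}) ` FF) Q"
  shows "shatters FF Q"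
  unfolding shatters_def
proof (intro allI impI)
  fix A assume "A \<subseteq> Q"
  then obtain F where "F \<in> FF" "(F - {a}) \<inter> Q = A"
    using assms(2) unfolding shatters_def by blast
  then show "\<exists>F\<in>FF. F \<inter> Q = A"
    using assms(1) by blast
qed

lemma shatters_insert_if_shatters_pairs:
  assumes "a \<notin> Q" "shatters {G\<in>FF. a \<notin> G \<and> insert a G \<in> FF} Q"
  shows "shatters FF (insert a Q)"
  unfolding shatters_def
proof (intro allI impI)
  fix A assume A: "A \<subseteq> insert a Q"
  then have "A - {a} \<subseteq> Q"
    by blast
  then obtain G where G: "G \<in> FF" "a \<notin> G" "insert a G \<in> FF" "G \<inter> Q = A - {a}"
    using assms(2) unfolding shatters_def by blast
  show "\<exists>F\<in>FF. F \<inter> insert a Q = A"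
  proof (cases "a \<in> A")
    case True
    then show ?thesis
      using G A by (intro bexI[of _ "insert a G"]) auto
  next
    case False
    then show ?thesis
      using G A by (intro bexI[of _ G]) auto
  qed
qed

text \<open>Pajor's form of the lemma, by induction on the ground set: the compression
  \<open>F \<mapsto> F - {a}\<close> splits \<open>FF\<close> into two families on \<open>P\<close> whose shattered sets \<open>Q\<close> and
  \<open>insert a Q\<close> are shattered by \<open>FF\<close>.\<close>
lemma card_le_card_shattered:
  "finite P \<Longrightarrow> FF \<subseteq> Pow P \<Longrightarrow> card FF \<le> card {Q. Q \<subseteq> P \<and> shatters FF Q}"
proof (induction P arbitrary: FF rule: finite_induct)
  case empty
  then have "FF = {} \<or> FF = {{}}"
    by (simp add: subset_singleton_iff)
  moreover have "shatters {{}} {}"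
    by (simp add: shatters_def)
  ultimately show ?case
    by (auto simp: Collect_conv_if)
next
  case (insert a P)
  let ?F0 = "(\<lambda>F. F - {a}) ` FF" and ?F1 = "{G\<in>FF. a \<notin> G \<and> insert a G \<in> FF}"
  let ?sh = "\<lambda>G. {Q. Q \<subseteq> P \<and> shatters G Q}"
  have "finite FF"
    using insert.prems insert.hyps(1) by (simp add: finite_subset)
  then have "card FF = card ?F0 + card ?F1"
    by (rule card_eq_card_Diff_image_add_card_pairs)
  also have "\<dots> \<le> card (?sh ?F0) + card (?sh ?F1)"
    using insert.prems insert.hyps(2) by (intro add_mono insert.IH) auto
  also have "\<dots> = card (?sh ?F0) + card (insert a ` ?sh ?F1)"
  proof -
    have "inj_on (insert a) (?sh ?F1)"
      by (rule inj_onI) (use insert.hyps(2) in \<open>auto simp: insert_ident subset_iff\<close>)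
    then show ?thesis
      by (simp add: card_image)
  qed
  also have "\<dots> = card (?sh ?F0 \<union> insert a ` ?sh ?F1)"
    using insert.hyps by (intro card_Un_disjoint[symmetric]) auto
  also have "\<dots> \<le> card {Q. Q \<subseteq> insert a P \<and> shatters FF Q}"
  proof (rule card_mono)
    show "finite {Q. Q \<subseteq> insert a P \<and> shatters FF Q}"
      using insert.hyps(1) by simp
    have "shatters FF Q" if "Q \<in> ?sh ?F0" for Q
      using that insert.hyps(2) shatters_if_shatters_Diff_image[of a Q FF] by auto
    moreover have "shatters FF (insert a Q)" if "Q \<in> ?sh ?F1" for Q
      using that insert.hyps(2) shatters_insert_if_shatters_pairs[of a Q FF] by auto
    ultimately show "?sh ?F0 \<union> insert a ` ?sh ?F1 \<subseteq> {Q. Q \<subseteq> insert a P \<and> shatters FF Q}"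
      by blast
  qed
  finally show ?case .
qed

lemma sauer_shelah:
  assumes "finite P" "FF \<subseteq> Pow P" "\<And>Q. Q \<subseteq> P \<Longrightarrow> card Q = Suc d \<Longrightarrow> \<not> shatters FF Q"
  shows "card FF \<le> (\<Sum>i\<le>d. card P choose i)"
proof -
  have "card Q \<le> d" if "Q \<subseteq> P" "shatters FF Q" for Q
  proof (rule ccontr)
    assume "\<not> card Q \<le> d"
    then obtain Q' where "Q' \<subseteq> Q" "card Q' = Suc d"
      using obtain_subset_with_card_n[of "Suc d" Q] by auto
    then show False
      using assms(3)[of Q'] that shatters_subset by blast
  qed
  then have "{Q. Q \<subseteq> P \<and> shatters FF Q} \<subseteq> (\<Union>i\<le>d. {Q. Q \<subseteq> P \<and> card Q = i})"
    by auto
  then have "card {Q. Q \<subseteq> P \<and> shatters FF Q} \<le> card (\<Union>i\<le>d. {Q. Q \<subseteq> P \<and> card Q = i})"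
    using assms(1) by (intro card_mono) auto
  then have "card FF \<le> card (\<Union>i\<le>d. {Q. Q \<subseteq> P \<and> card Q = i})"
    using card_le_card_shattered[OF assms(1,2)] by linarith
  also have "\<dots> = (\<Sum>i\<le>d. card {Q. Q \<subseteq> P \<and> card Q = i})"
    using assms(1) by (intro card_UN_disjoint) auto
  also have "\<dots> = (\<Sum>i\<le>d. card P choose i)"
    using n_subsets[OF assms(1)] by simp
  finally show ?thesis .
qed

section \<open>Numerical estimates\<close>

lemma sum_binomial_le_two_pow: "(\<Sum>i\<le>d. k choose i) \<le> 2 ^ k"
proof -
  have "(\<Sum>i\<le>d. k choose i) = (\<Sum>i\<in>{..d} \<inter> {..k}. k choose i)"
    by (rule sum.mono_neutral_right) auto
  also have "\<dots> \<le> (\<Sum>i\<le>k. k choose i)"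
    by (rule sum_mono2) auto
  finally show ?thesis
    by (simp add: choose_row_sum)
qed

text \<open>Weight the \<open>i\<close>-th term by \<open>(k / d) ^ (d - i) \<ge> 1\<close> and complete the binomial
  expansion of \<open>(1 + d / k) ^ k \<le> e ^ d\<close>.\<close>
lemma sum_binomial_le_exp_pow:
  fixes k d :: nat
  assumes "1 \<le> d" "d \<le> k"
  shows "real (\<Sum>i\<le>d. k choose i) \<le> (exp 1 * k / d) ^ d"
proof -
  let ?q = "real k / real d"
  have q: "1 \<le> ?q"
    using assms by auto
  have binomial: "(\<Sum>i\<le>k. real (k choose i) * (real d / real k) ^ i) \<le> exp 1 ^ d"
  proof -
    have "(\<Sum>i\<le>k. real (k choose i) * (real d / real k) ^ i) = (real d / real k + 1) ^ k"
      using binomial_ring[of "real d / real k" 1 k] by simp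
    also have "\<dots> \<le> exp (real d / real k) ^ k"
      using exp_ge_add_one_self[of "real d / real k"] by (intro power_mono) (auto simp: add.commute)
    also have "\<dots> = exp 1 ^ d"
      using assms by (simp add: exp_of_nat_mult[symmetric])
    finally show ?thesis .
  qed
  have "real (\<Sum>i\<le>d. k choose i) \<le> (\<Sum>i\<le>d. real (k choose i) * ?q ^ (d - i))"
    unfolding of_nat_sum
    using mult_left_mono[OF one_le_power[OF q]] by (intro sum_mono) (metis mult_1_right of_nat_0_le_iff)
  also have "\<dots> = ?q ^ d * (\<Sum>i\<le>d. real (k choose i) * (real d / real k) ^ i)"
  proof -
    have "real (k choose i) * ?q ^ (d - i) = ?q ^ d * (real (k choose i) * (real d / real k) ^ i)"
      if "i \<le> d" for i
    proof -
      have "?q ^ d * (real d / real k) ^ i = ?q ^ d / ?q ^ i"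
        by (simp add: power_divide)
      also have "\<dots> = ?q ^ (d - i)"
        using that assms by (intro power_diff[symmetric]) auto
      finally show ?thesis
        by (metis mult.left_commute)
    qed
    then show ?thesis
      unfolding sum_distrib_left by (intro sum.cong) auto
  qed
  also have "\<dots> \<le> ?q ^ d * (\<Sum>i\<le>k. real (k choose i) * (real d / real k) ^ i)"
    using assms by (intro mult_left_mono sum_mono2) auto
  also have "\<dots> \<le> ?q ^ d * exp 1 ^ d"
    using binomial by (intro mult_left_mono) auto
  finally show ?thesis
    by (simp add: power_mult_distrib[symmetric] mult.commute)
qed

lemma sub_mult_ln_mono:
  fixes c y z :: real
  assumes "0 \<le> c" "c \<le> z" "0 < z" "z \<le> y"
  shows "z - c * ln z \<le> y - c * ln y"
proof -
  have "c * (ln y - ln z) \<le> c * (y / z - 1)"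
    using assms ln_le_minus_one[of "y / z"] by (intro mult_left_mono) (auto simp: ln_div)
  also have "\<dots> \<le> z * (y / z - 1)"
    using assms by (intro mult_right_mono) auto
  also have "\<dots> = y - z"
    using assms by (simp add: field_simps)
  finally show ?thesis
    by (simp add: algebra_simps)
qed

lemma one_sub_pow_le_inverse_square:
  fixes \<delta> M :: real
  assumes "0 \<le> \<delta>" "\<delta> \<le> 1" "0 < M" "2 * ln M \<le> k * \<delta>"
  shows "(1 - \<delta>) ^ k \<le> 1 / M\<^sup>2"
proof -
  have "(1 - \<delta>) ^ k \<le> exp (- \<delta>) ^ k"
    using assms exp_ge_add_one_self[of "- \<delta>"] by (intro power_mono) auto
  also have "\<dots> = exp (- (k * \<delta>))"
    by (simp add: exp_of_nat_mult[symmetric])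
  also have "\<dots> \<le> exp (- (2 * ln M))"
    using assms by simp
  also have "\<dots> = 1 / M\<^sup>2"
    using assms by (simp add: exp_minus exp_double inverse_eq_divide)
  finally show ?thesis .
qed

text \<open>With \<open>c = 2 e / \<delta>\<close>, the function \<open>y \<mapsto> y - c ln y\<close> increases beyond \<open>c\<close> and
  already exceeds \<open>e\<close> at \<open>y = 25 / \<delta>\<^sup>2\<close>.\<close>
lemma sub_mult_ln_le_exp1_imp_le:
  fixes \<delta> y :: real
  assumes \<delta>: "0 < \<delta>" "\<delta> \<le> 1/2" and y: "0 < y" "y - 2 * exp 1 / \<delta> * ln y \<le> exp 1"
  shows "y \<le> 25 / \<delta>\<^sup>2"
proof -
  define c z where "c = 2 * exp 1 / \<delta>" and "z = 25 / \<delta>\<^sup>2"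
  have "\<delta>\<^sup>2 \<le> 1/4"
    using \<delta> power_mono[of \<delta> "1/2" 2] by (simp add: power2_eq_square)
  then have z: "100 \<le> z" "20 \<le> 5 / \<delta>\<^sup>2"
    using \<delta> by (simp_all add: z_def pos_le_divide_eq)
  have e3: "exp 1 \<le> (3::real)"
    by (rule exp_le)
  have "ln z = 2 * (ln (5 / (\<delta> * exp 1)) + 1)"
    using \<delta> ln_realpow[of "5::real" 2] ln_realpow[of \<delta> 2] by (simp add: z_def ln_div ln_mult power_divide)
  also have "\<dots> \<le> 2 * (5 / (\<delta> * exp 1))"
    using ln_le_minus_one[of "5 / (\<delta> * exp 1)"] \<delta> by simp
  finally have "c * ln z \<le> c * (2 * (5 / (\<delta> * exp 1)))"
    using \<delta> by (intro mult_left_mono) (auto simp: c_def)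
  also have "\<dots> = 20 / \<delta>\<^sup>2"
    using \<delta> by (simp add: c_def field_simps power2_eq_square)
  finally have z_gt: "exp 1 < z - c * ln z"
    using z e3 by (simp add: z_def diff_divide_distrib[symmetric])
  have "\<delta> * (exp 1 * 2) \<le> 1/2 * (3 * 2)"
    using \<delta> e3 by (intro mult_mono) auto
  then have "c \<le> z"
    using \<delta> by (simp add: c_def z_def field_simps power2_eq_square)
  show ?thesis
  proof (rule ccontr)
    assume "\<not> y \<le> 25 / \<delta>\<^sup>2"
    then have "z - c * ln z \<le> y - c * ln y"
      using \<open>c \<le> z\<close> z \<delta> by (intro sub_mult_ln_mono) (auto simp: c_def z_def)
    then show False
      using y(2) z_gt by (simp add: c_def)
  qed
qed

text \<open>The bound on \<open>M\<close> produced by the packing argument, with \<open>k\<close> the size of the sample.\<close>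
lemma packing_numeric:
  fixes M k d :: nat and \<delta> :: real
  assumes \<delta>: "0 < \<delta>" "\<delta> \<le> 1/2" and d: "1 \<le> d" and M: "2 \<le> M"
    and k: "real k \<le> 2 * ln M / \<delta> + 1" and sum: "M \<le> (\<Sum>i\<le>d. k choose i)"
  shows "real M \<le> (5 / \<delta>) ^ (2 * d)"
proof -
  have z_pow: "(5 / \<delta>) ^ (2 * d) = (25 / \<delta>\<^sup>2) ^ d"
    by (simp add: power_mult power_divide)
  show ?thesis
  proof (cases "k \<le> d")
    case True
    have "M \<le> 2 ^ k"
      using sum sum_binomial_le_two_pow[where d = d and k = k] by linarith
    then have "real M \<le> 2 ^ k"
      by simp
    also have "\<dots> \<le> (5 / \<delta>) ^ (2 * d)"
      using True \<delta> by (intro order.trans[OF power_increasing power_mono]) (auto simp: field_simps)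
    finally show ?thesis .
  next
    case False
    define y where "y = root d M"
    have y: "y ^ d = M" "0 < y"
      using d M by (auto simp: y_def)
    have ln_M: "ln M = d * ln y"
      using ln_realpow[of y d] y(1) by simp
    have "y ^ d \<le> real (\<Sum>i\<le>d. k choose i)"
      unfolding y(1) using sum by (simp only: of_nat_le_iff)
    also have "\<dots> \<le> (exp 1 * k / d) ^ d"
      using False d by (intro sum_binomial_le_exp_pow) auto
    finally have "y ^ d \<le> (exp 1 * k / d) ^ d" .
    moreover have "Suc (d - 1) = d"
      using d by simp
    ultimately have "y ^ Suc (d - 1) \<le> (exp 1 * k / d) ^ Suc (d - 1)"
      by simp
    then have "y \<le> exp 1 * k / d"
      by (rule power_le_imp_le_base) simp
    also have "\<dots> \<le> exp 1 * (2 * ln M / \<delta> + 1) / d"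
      using k by (intro divide_right_mono mult_left_mono) auto
    also have "\<dots> = 2 * exp 1 / \<delta> * ln y + exp 1 / d"
      using d \<delta> by (simp add: ln_M field_simps)
    also have "\<dots> \<le> 2 * exp 1 / \<delta> * ln y + exp 1"
      using d by (simp add: divide_le_eq)
    finally have "y \<le> 25 / \<delta>\<^sup>2"
      using \<delta> y(2) by (intro sub_mult_ln_le_exp1_imp_le) simp_all
    then have "real M \<le> (25 / \<delta>\<^sup>2) ^ d"
      using power_mono[of y "25 / \<delta>\<^sup>2" d] y by simp
    then show ?thesis
      using z_pow by simp
  qed
qed

lemma exists_pow2_bracket:
  fixes x :: real
  assumes "2 \<le> x"
  obtains m where "2 \<le> m" "2 ^ (m - 1) \<le> x" "x < 2 ^ m"
proof -
  define m where "m = (LEAST n. x < 2 ^ n)"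
  have "\<exists>n. x < 2 ^ n"
    by (rule real_arch_pow) simp
  then have "x < 2 ^ m"
    unfolding m_def by (rule LeastI_ex)
  have "m \<noteq> 0"
  proof
    assume "m = 0"
    with \<open>x < 2 ^ m\<close> assms show False
      by simp
  qed
  have "m \<noteq> 1"
  proof
    assume "m = 1"
    with \<open>x < 2 ^ m\<close> assms show False
      by simp
  qed
  have "\<not> x < 2 ^ (m - 1)"
    unfolding m_def by (rule not_less_Least) (use \<open>m \<noteq> 0\<close> in \<open>simp add: m_def\<close>)
  moreover have "2 \<le> m"
    using \<open>m \<noteq> 0\<close> \<open>m \<noteq> 1\<close> by presburger
  ultimately show ?thesis
    using that \<open>x < 2 ^ m\<close> by simp
qed

text \<open>The inequality of \<open>depth_numeric\<close> at its smallest admissible value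
  \<open>L = (m - 1) ln 2\<close>, written with \<open>p = m - 1\<close> and \<open>l = ln 2\<close>.\<close>
lemma depth_numeric_threshold:
  fixes p l :: real
  assumes p: "p = 1 \<or> 2 \<le> p" and l: "l = ln 2"
  shows "(p + 1) * (4 * l + ln (p + 1) + p * l) \<le> 2 * (p * l) * (8 * l + p * l)"
proof -
  have l_bounds: "2/3 \<le> l" "l \<le> 25/36"
    using ln2_ge_two_thirds ln2_le_25_over_36 l by auto
  from p show ?thesis
  proof
    assume "p = 1"
    then have "2 * (p * l) * (8 * l + p * l) - (p + 1) * (4 * l + ln (p + 1) + p * l)
        = 6 * l * (3 * l - 2)"
      using l by (simp add: algebra_simps)
    moreover have "0 \<le> 6 * l * (3 * l - 2)"
      using l_bounds by simp
    ultimately show ?thesis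
      by linarith
  next
    assume p2: "2 \<le> p"
    have "ln ((p + 1) / 8) \<le> (p + 1) / 8 - 1"
      using p2 by (intro ln_le_minus_one) simp
    moreover have "ln (8::real) = 3 * l"
      using l ln_realpow[of 2 3] by simp
    ultimately have ln_le: "ln (p + 1) \<le> (p + 1) / 8 + 3 * l - 1"
      using p2 by (simp add: ln_div)
    have "(p + 1) * (4 * l + ln (p + 1) + p * l) \<le> (p + 1) * (4 * l + ((p + 1) / 8 + 3 * l - 1) + p * l)"
      using ln_le p2 by (intro mult_left_mono) auto
    moreover have "2 * (p * l) * (8 * l + p * l) - (p + 1) * (4 * l + ((p + 1) / 8 + 3 * l - 1) + p * l)
        = p\<^sup>2 * (l * (2 * l - 1) - 1/8) + p * (8 * l * (2 * l - 1) + 3/4) + (7/8 - 7 * l)"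
      by (simp add: field_simps power2_eq_square)
    moreover have "(2/3) * (1/3) \<le> l * (2 * l - 1)"
      using l_bounds by (intro mult_mono) auto
    moreover have "0 \<le> p\<^sup>2 * (l * (2 * l - 1) - 1/8)"
      using calculation(3) by simp
    moreover have "2 * 2 \<le> p * (8 * l * (2 * l - 1) + 3/4)"
      using calculation(3) p2 by (intro mult_mono) auto
    ultimately show ?thesis
      using l_bounds by linarith
  qed
qed

lemma depth_numeric:
  fixes m :: nat and L :: real
  assumes m: "2 \<le> m" and L: "(real m - 1) * ln 2 \<le> L"
  shows "m * (ln (16 * m) + L) \<le> 2 * L * (ln 480 + L)"
proof -
  define l p where "l = ln (2::real)" and "p = real m - 1"
  define L0 where "L0 = p * l"
  have l_bounds: "2/3 \<le> l" "l \<le> 25/36"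
    using ln2_ge_two_thirds ln2_le_25_over_36 l_def by auto
  have "m = 2 \<or> 3 \<le> m"
    using m by linarith
  then have p: "real m = p + 1" "1 \<le> p" "p = 1 \<or> 2 \<le> p"
    using m by (auto simp: p_def)
  have "L0 \<le> L"
    using L by (simp add: L0_def p_def l_def)
  have "0 \<le> L0"
    unfolding L0_def using p(2) l_bounds by (intro mult_nonneg_nonneg) auto
  have "ln (16::real) = 4 * l"
    using ln_realpow[of 2 4] by (simp add: l_def)
  then have ln_16m: "ln (16 * real m) = 4 * l + ln (p + 1)"
    using m by (simp add: ln_mult p(1)[symmetric])
  have "ln (256::real) = 8 * l"
    using ln_realpow[of 2 8] by (simp add: l_def)
  moreover have "ln (256::real) \<le> ln 480"
    by simp
  ultimately have ln_480: "8 * l \<le> ln 480"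
    by linarith
  \<comment> \<open>As a function of \<open>L\<close>, the difference of the two sides increases from \<open>L0\<close> on.\<close>
  have "2 * L * (8 * l + L) - (p + 1) * (4 * l + ln (p + 1) + L)
      - (2 * L0 * (8 * l + L0) - (p + 1) * (4 * l + ln (p + 1) + L0))
      = (L - L0) * (16 * l + 2 * L + 2 * L0 - (p + 1))"
    by (simp add: algebra_simps)
  moreover have "0 \<le> (L - L0) * (16 * l + 2 * L + 2 * L0 - (p + 1))"
  proof -
    have "p * (2/3) \<le> p * l"
      using l_bounds p(2) by (intro mult_left_mono) auto
    then have "p + 1 \<le> 16 * l + 2 * L + 2 * L0"
      using \<open>L0 \<le> L\<close> l_bounds p(2) unfolding L0_def by linarith
    with \<open>L0 \<le> L\<close> show ?thesis
      by (intro mult_nonneg_nonneg) simp_all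
  qed
  moreover have "(p + 1) * (4 * l + ln (p + 1) + L0) \<le> 2 * L0 * (8 * l + L0)"
    unfolding L0_def by (rule depth_numeric_threshold[OF p(3) l_def])
  ultimately have "(p + 1) * (4 * l + ln (p + 1) + L) \<le> 2 * L * (8 * l + L)"
    by linarith
  also have "\<dots> \<le> 2 * L * (ln 480 + L)"
    using ln_480 \<open>L0 \<le> L\<close> \<open>0 \<le> L0\<close> by (intro mult_left_mono) auto
  finally show ?thesis
    using p(1) ln_16m by simp
qed

lemma five_pow_add_one_le_eight_pow:
  fixes \<delta> :: real
  assumes "0 < \<delta>" "\<delta> \<le> 5" "1 \<le> d"
  shows "(5 / \<delta>) ^ (2 * d) + 1 \<le> (8 / \<delta>) ^ (2 * d)"
proof -
  define a where "a = (5 / \<delta>) ^ (2 * d)"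
  have a: "1 \<le> a"
    unfolding a_def using assms by (intro one_le_power) (simp add: field_simps)
  have "(2::real) \<le> (8/5) ^ 2"
    by (simp add: power2_eq_square)
  also have "\<dots> \<le> (8/5) ^ (2 * d)"
    using assms(3) by (intro power_increasing) auto
  finally have two_le: "2 \<le> (8/5::real) ^ (2 * d)" .
  have "a + 1 \<le> 2 * a"
    using a by simp
  also have "\<dots> \<le> (8/5) ^ (2 * d) * a"
    using two_le a by (intro mult_right_mono) auto
  also have "\<dots> = (8 / \<delta>) ^ (2 * d)"
  proof -
    have "8/5 * (5 / \<delta>) = 8 / \<delta>"
      by simp
    then show ?thesis
      unfolding a_def by (metis power_mult_distrib)
  qed
  finally show ?thesis
    unfolding a_def .
qed

lemma net_size_numeric:
  fixes \<nu> m :: nat and \<epsilon> \<delta> :: real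
  assumes \<nu>: "1 \<le> \<nu>" and m: "2 \<le> m" and \<epsilon>: "0 < \<epsilon>" "2 ^ (m - 1) \<le> 1 / \<epsilon>"
    and \<delta>: "\<delta> = \<epsilon> / (2 * real m)"
  shows "((5 / \<delta>) ^ (2 * (\<nu> + 1)) + 1) ^ m \<le> (480 / \<epsilon>) powr (8 * real \<nu> * ln (1 / \<epsilon>))"
proof -
  define L w where "L = ln (1 / \<epsilon>)" and "w = 16 * m / \<epsilon>"
  have "1 \<le> 1 / \<epsilon>"
    using \<epsilon>(2) one_le_power[of "2::real" "m - 1"] by linarith
  then have "\<epsilon> \<le> 1"
    using \<epsilon>(1) by (simp add: field_simps)
  then have "\<epsilon> \<le> 10 * real m" "\<epsilon> \<le> 16 * real m"
    using m by linarith+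
  then have "0 < \<delta>" "\<delta> \<le> 5" "1 \<le> w"
    using \<epsilon>(1) m by (simp_all add: \<delta> w_def field_simps)
  have w: "8 / \<delta> = w"
    using m by (simp add: \<delta> w_def field_simps)
  have "((5 / \<delta>) ^ (2 * (\<nu> + 1)) + 1) ^ m \<le> ((8 / \<delta>) ^ (2 * (\<nu> + 1))) ^ m"
    using five_pow_add_one_le_eight_pow[OF \<open>0 < \<delta>\<close> \<open>\<delta> \<le> 5\<close>, of "\<nu> + 1"] \<open>0 < \<delta>\<close>
    by (intro power_mono) auto
  also have "\<dots> = w ^ (2 * (\<nu> + 1) * m)"
    unfolding w by (rule power_mult[symmetric])
  also have "\<dots> \<le> w ^ (4 * \<nu> * m)"
    using \<open>1 \<le> w\<close> \<nu> by (intro power_increasing mult_le_mono1) auto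
  also have "\<dots> = exp (ln w) ^ (4 * \<nu> * m)"
    using \<open>1 \<le> w\<close> by simp
  also have "\<dots> = exp (4 * \<nu> * (m * ln w))"
    by (simp add: exp_of_nat_mult[symmetric] mult_ac)
  also have "\<dots> \<le> exp (4 * \<nu> * (2 * L * ln (480 / \<epsilon>)))"
  proof -
    have "ln (2 ^ (m - 1)) \<le> L"
      unfolding L_def using \<epsilon> by (subst ln_le_cancel_iff) auto
    moreover have "ln (2 ^ (m - 1) :: real) = (real m - 1) * ln 2"
      using m by (simp add: ln_realpow of_nat_diff)
    ultimately have "(real m - 1) * ln 2 \<le> L"
      by simp
    then have "m * (ln (16 * m) + L) \<le> 2 * L * (ln 480 + L)"
      using depth_numeric[OF m] by blast
    moreover have "ln w = ln (16 * m) + L" "ln (480 / \<epsilon>) = ln 480 + L"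
      using \<epsilon> m by (simp_all add: w_def L_def ln_div ln_mult)
    ultimately have "m * ln w \<le> 2 * L * ln (480 / \<epsilon>)"
      by simp
    then have "4 * \<nu> * (m * ln w) \<le> 4 * \<nu> * (2 * L * ln (480 / \<epsilon>))"
      by (intro mult_left_mono) auto
    then show ?thesis
      by simp
  qed
  also have "\<dots> = (480 / \<epsilon>) powr (8 * \<nu> * L)"
    using \<epsilon> by (simp add: powr_def mult_ac)
  finally show ?thesis
    by (simp add: L_def)
qed

section \<open>Nets built from heavy vertices\<close>

definition containing :: "'b \<Rightarrow> 'b set set \<Rightarrow> 'b set set" where
  "containing x Y = {J\<in>Y. x \<in> J}"

lemma card_insert_UN_le_pow:
  assumes "finite R" "card R \<le> B" "\<And>r. r \<in> R \<Longrightarrow> finite (N r)"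
    "\<And>r. r \<in> R \<Longrightarrow> card (N r) \<le> (B + 1) ^ n"
  shows "card (insert x (\<Union>r\<in>R. N r)) \<le> (B + 1) ^ Suc n"
proof -
  have "finite (\<Union>r\<in>R. N r)"
    using assms(1,3) by blast
  then have "card (insert x (\<Union>r\<in>R. N r)) \<le> Suc (card (\<Union>r\<in>R. N r))"
    by (simp add: card_insert_if)
  also have "\<dots> \<le> Suc (\<Sum>r\<in>R. card (N r))"
    using card_UN_le[OF assms(1), of N] by simp
  also have "\<dots> \<le> Suc (card R * (B + 1) ^ n)"
    using assms(4) sum_bounded_above[of R "\<lambda>r. card (N r)"] by simp
  also have "\<dots> \<le> Suc (B * (B + 1) ^ n)"
    using assms(2) by simp
  also have "\<dots> \<le> (B + 1) ^ Suc n"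
    by simp
  finally show ?thesis .
qed

lemma (in finite_simple_graph) not_shatters_traces:
  assumes P: "P \<subseteq> MIS V E" "finite P" and \<nu>: "1 \<le> nu_bi V E"
    and Q: "Q \<subseteq> P" "card Q = nu_bi V E + 2"
  shows "\<not> shatters ((\<lambda>x. {K\<in>P. x \<in> K}) ` X) Q"
proof
  assume shatters: "shatters ((\<lambda>x. {K\<in>P. x \<in> K}) ` X) Q"
  have "\<exists>x. {K\<in>Q. x \<in> K} = Q - {J}" for J
  proof -
    have "Q - {J} \<subseteq> Q"
      by blast
    then have "\<exists>F\<in>(\<lambda>x. {K\<in>P. x \<in> K}) ` X. F \<inter> Q = Q - {J}"
      using shatters unfolding shatters_def by simp
    then obtain x where "{K\<in>P. x \<in> K} \<inter> Q = Q - {J}"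
      by auto
    moreover have "{K\<in>P. x \<in> K} \<inter> Q = {K\<in>Q. x \<in> K}"
      using Q(1) by auto
    ultimately show ?thesis
      by auto
  qed
  moreover have "Q \<subseteq> MIS V E" "finite Q"
    using Q(1) P finite_subset by blast+
  ultimately have "bi_witness V E (card Q)"
    using Q(2) \<nu> by (intro bi_witness_if_co_singletons_cut_out) auto
  then show False
    using bi_witness_le_nu_bi Q(2) by fastforce
qed

locale MIS_prob = finite_simple_graph +
  fixes \<mu> :: "'a set \<Rightarrow> real"
  assumes prob: "fin_prob (MIS V E) \<mu>"
begin

lemma nonneg: "0 \<le> \<mu> J"
  and finite_support: "finite {J. \<mu> J \<noteq> 0}"
  and support_MIS: "{J. \<mu> J \<noteq> 0} \<subseteq> MIS V E"
  using prob by (auto simp: fin_prob_def)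

lemmas meas_mono' = meas_mono[OF nonneg finite_support]
  and meas_Un_le' = meas_Un_le[OF nonneg finite_support]

definition heavy :: "'a set set \<Rightarrow> 'a set" where
  "heavy Y = {x\<in>V. meas \<mu> Y / 2 < meas \<mu> (containing x Y)}"

definition separated :: "real \<Rightarrow> 'a set set \<Rightarrow> 'a set \<Rightarrow> bool" where
  "separated \<delta> Y R \<longleftrightarrow> (\<forall>r\<in>R. \<forall>r'\<in>R. r \<noteq> r' \<longrightarrow>
     \<delta> < meas \<mu> ((containing r Y - containing r' Y) \<union> (containing r' Y - containing r Y)))"

definition relative_net :: "'a set set \<Rightarrow> real \<Rightarrow> 'a set set \<Rightarrow> bool" where
  "relative_net Y \<beta> N \<longleftrightarrow> N \<subseteq> MIS V E \<and> finite N \<and>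
     (\<forall>S\<subseteq>V. \<beta> \<le> meas \<mu> (Kset V E S \<inter> Y) \<longrightarrow> N \<inter> Kset V E S \<noteq> {})"

text \<open>Two heavy vertices lie together in more than half of \<open>Y\<close>, hence in a common
  maximal independent set.\<close>
lemma heavy_independent:
  assumes "Y \<subseteq> MIS V E"
  shows "independent V E (heavy Y)"
  unfolding independent_def
proof (intro conjI ballI)
  show "heavy Y \<subseteq> V"
    by (auto simp: heavy_def)
next
  fix x y assume "x \<in> heavy Y" "y \<in> heavy Y"
  then have "meas \<mu> Y / 2 < meas \<mu> (containing x Y)" "meas \<mu> Y / 2 < meas \<mu> (containing y Y)"
    by (auto simp: heavy_def)
  moreover have "meas \<mu> (containing x Y \<union> containing y Y) \<le> meas \<mu> Y"
    by (intro meas_mono') (auto simp: containing_def)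
  ultimately have "0 < meas \<mu> (containing x Y \<inter> containing y Y)"
    using meas_Un_Int[OF finite_support, of "containing x Y" "containing y Y"] by linarith
  then have "\<exists>J\<in>containing x Y \<inter> containing y Y. \<mu> J \<noteq> 0"
    by (rule meas_pos_imp_in_support)
  then obtain J where "J \<in> containing x Y \<inter> containing y Y"
    by blast
  then have "J \<in> MIS V E" "x \<in> J" "y \<in> J"
    using assms by (auto simp: containing_def)
  then show "\<not> E x y"
    by (rule MIS_no_edge)
qed

lemma subset_heavy:
  assumes "S \<subseteq> V" "meas \<mu> Y / 2 < meas \<mu> (Kset V E S \<inter> Y)"
  shows "S \<subseteq> heavy Y"
proof
  fix x assume "x \<in> S"
  then have "Kset V E S \<inter> Y \<subseteq> containing x Y"
    by (auto simp: Kset_def containing_def)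
  then have "meas \<mu> (Kset V E S \<inter> Y) \<le> meas \<mu> (containing x Y)"
    by (rule meas_mono')
  then show "x \<in> heavy Y"
    using assms \<open>x \<in> S\<close> unfolding heavy_def by auto
qed

lemma exists_MIS_containing_heavy:
  assumes "Y \<subseteq> MIS V E"
  obtains J where "J \<in> MIS V E" "heavy Y \<subseteq> J"
  using independent_extends_to_MIS[OF heavy_independent[OF assms]] .

lemma relative_net_majority:
  assumes "Y \<subseteq> MIS V E" "meas \<mu> Y < 2 * \<beta>"
  obtains J where "relative_net Y \<beta> {J}"
proof -
  obtain J where J: "J \<in> MIS V E" "heavy Y \<subseteq> J"
    using exists_MIS_containing_heavy[OF assms(1)] .
  have "J \<in> Kset V E S" if "S \<subseteq> V" "\<beta> \<le> meas \<mu> (Kset V E S \<inter> Y)" for S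
  proof -
    have "S \<subseteq> heavy Y"
      using that assms(2) by (intro subset_heavy) auto
    with J show ?thesis
      unfolding Kset_def by blast
  qed
  with J have "relative_net Y \<beta> {J}"
    by (simp add: relative_net_def)
  then show ?thesis
    by (rule that)
qed

lemma exists_separated_representatives:
  assumes "finite L" "0 \<le> \<delta>"
  obtains R where "R \<subseteq> L" "separated \<delta> Y R"
    "\<forall>x\<in>L. \<exists>r\<in>R. meas \<mu> (containing x Y - containing r Y) \<le> \<delta>"
proof -
  let ?dom = "\<lambda>x r. meas \<mu> (containing x Y - containing r Y) \<le> \<delta>"
  have "?dom x x" if "x \<in> L" for x
    using assms(2) by (simp add: meas_def)
  then obtain R where R: "R \<subseteq> L" "\<forall>x\<in>L. \<exists>r\<in>R. ?dom x r"
    and no_mutual: "\<forall>r\<in>R. \<forall>r'\<in>R. r \<noteq> r' \<longrightarrow> \<not> ?dom r r' \<or> \<not> ?dom r' r"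
    by (rule greedy_dominating_subset[where dominates = ?dom, OF assms(1)])
  have "separated \<delta> Y R"
    unfolding separated_def
  proof (intro ballI impI)
    fix r r' assume "r \<in> R" "r' \<in> R" "r \<noteq> r'"
    then have "\<not> ?dom r r' \<or> \<not> ?dom r' r"
      using no_mutual by simp
    moreover have "meas \<mu> (containing r Y - containing r' Y) \<le> meas \<mu> ((containing r Y - containing r' Y) \<union> (containing r' Y - containing r Y))"
      by (rule meas_mono') blast
    moreover have "meas \<mu> (containing r' Y - containing r Y) \<le> meas \<mu> ((containing r Y - containing r' Y) \<union> (containing r' Y - containing r Y))"
      by (rule meas_mono') blast
    ultimately show "\<delta> < meas \<mu> ((containing r Y - containing r' Y) \<union> (containing r' Y - containing r Y))"
      by linarith
  qed
  with R show ?thesis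
    by (intro that)
qed

lemma meas_Kset_le_representative:
  assumes "x \<in> S" "meas \<mu> (containing x Y - containing r Y) \<le> \<delta>"
  shows "meas \<mu> (Kset V E S \<inter> Y) \<le> meas \<mu> (Kset V E S \<inter> containing r Y) + \<delta>"
proof -
  have "Kset V E S \<inter> Y \<subseteq> (Kset V E S \<inter> containing r Y) \<union> (containing x Y - containing r Y)"
    using assms(1) by (auto simp: Kset_def containing_def)
  then have "meas \<mu> (Kset V E S \<inter> Y)
      \<le> meas \<mu> ((Kset V E S \<inter> containing r Y) \<union> (containing x Y - containing r Y))"
    by (rule meas_mono')
  also have "\<dots> \<le> meas \<mu> (Kset V E S \<inter> containing r Y) + meas \<mu> (containing x Y - containing r Y)"
    by (rule meas_Un_le')
  finally have "meas \<mu> (Kset V E S \<inter> Y)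
      \<le> meas \<mu> (Kset V E S \<inter> containing r Y) + meas \<mu> (containing x Y - containing r Y)" .
  with assms(2) show ?thesis
    by linarith
qed

lemma relative_net_insert_children:
  assumes J0: "heavy Y \<subseteq> J0" "J0 \<in> MIS V E" and "finite R"
    and represent: "\<forall>x\<in>V - heavy Y. \<exists>r\<in>R. meas \<mu> (containing x Y - containing r Y) \<le> \<delta>"
    and child: "\<And>r. r \<in> R \<Longrightarrow> relative_net (containing r Y) (\<beta> - \<delta>) (child r)"
  shows "relative_net Y \<beta> (insert J0 (\<Union>r\<in>R. child r))"
  unfolding relative_net_def
proof (intro conjI allI impI)
  show "insert J0 (\<Union>r\<in>R. child r) \<subseteq> MIS V E" "finite (insert J0 (\<Union>r\<in>R. child r))"
    using J0 child \<open>finite R\<close> by (auto simp: relative_net_def)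
next
  fix S assume S: "S \<subseteq> V" "\<beta> \<le> meas \<mu> (Kset V E S \<inter> Y)"
  show "insert J0 (\<Union>r\<in>R. child r) \<inter> Kset V E S \<noteq> {}"
  proof (cases "S \<subseteq> heavy Y")
    case True
    then show ?thesis
      using J0 by (auto simp: Kset_def)
  next
    case False
    then obtain x where "x \<in> S" "x \<in> V - heavy Y"
      using S(1) by blast
    then have "\<exists>r\<in>R. meas \<mu> (containing x Y - containing r Y) \<le> \<delta>"
      using represent by simp
    then obtain r where "r \<in> R" "meas \<mu> (containing x Y - containing r Y) \<le> \<delta>" ..
    then have "meas \<mu> (Kset V E S \<inter> Y) \<le> meas \<mu> (Kset V E S \<inter> containing r Y) + \<delta>"
      using \<open>x \<in> S\<close> by (intro meas_Kset_le_representative)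
    then have "\<beta> - \<delta> \<le> meas \<mu> (Kset V E S \<inter> containing r Y)"
      using S(2) by linarith
    then have "child r \<inter> Kset V E S \<noteq> {}"
      using child[OF \<open>r \<in> R\<close>] S(1) unfolding relative_net_def by blast
    then show ?thesis
      using \<open>r \<in> R\<close> by blast
  qed
qed

text \<open>The net is a tree: the root contains all heavy vertices, and below it hang the nets for
  \<open>containing r Y\<close>, one for each representative \<open>r\<close> of the light vertices; each level halves
  the mass and loses only \<open>\<delta>\<close> of \<open>\<beta>\<close>.\<close>
lemma exists_relative_net:
  assumes "0 \<le> \<delta>" and bound: "\<And>Y R. R \<subseteq> V \<Longrightarrow> separated \<delta> Y R \<Longrightarrow> card R \<le> B"
  shows "Y \<subseteq> MIS V E \<Longrightarrow> meas \<mu> Y < 2 ^ Suc n * (\<beta> - n * \<delta>) \<Longrightarrow>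
    \<exists>N. relative_net Y \<beta> N \<and> card N \<le> (B + 1) ^ n"
proof (induction n arbitrary: Y \<beta>)
  case 0
  then have "meas \<mu> Y < 2 * \<beta>"
    by simp
  then obtain J where "relative_net Y \<beta> {J}"
    using relative_net_majority[OF "0.prems"(1)] by blast
  then show ?case
    by (intro exI[of _ "{J}"]) simp
next
  case (Suc n)
  obtain J0 where J0: "J0 \<in> MIS V E" "heavy Y \<subseteq> J0"
    using exists_MIS_containing_heavy[OF Suc.prems(1)] .
  obtain R where R: "R \<subseteq> V - heavy Y" "separated \<delta> Y R"
    and represent: "\<forall>x\<in>V - heavy Y. \<exists>r\<in>R. meas \<mu> (containing x Y - containing r Y) \<le> \<delta>"
    by (rule exists_separated_representatives[of "V - heavy Y" \<delta> Y]) (use finite_vertices assms(1) in auto)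
  have "\<forall>r\<in>R. \<exists>N. relative_net (containing r Y) (\<beta> - \<delta>) N \<and> card N \<le> (B + 1) ^ n"
  proof (intro ballI Suc.IH)
    fix r assume "r \<in> R"
    show "containing r Y \<subseteq> MIS V E"
      using Suc.prems(1) by (auto simp: containing_def)
    have "meas \<mu> (containing r Y) \<le> meas \<mu> Y / 2"
      using R(1) \<open>r \<in> R\<close> by (auto simp: heavy_def)
    also have "\<dots> < 2 ^ Suc n * (\<beta> - \<delta> - n * \<delta>)"
      using Suc.prems(2) by (simp add: algebra_simps)
    finally show "meas \<mu> (containing r Y) < 2 ^ Suc n * (\<beta> - \<delta> - n * \<delta>)" .
  qed
  then have "\<exists>child. \<forall>r\<in>R.
      relative_net (containing r Y) (\<beta> - \<delta>) (child r) \<and> card (child r) \<le> (B + 1) ^ n"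
    by (rule bchoice)
  then obtain child where child: "\<forall>r\<in>R.
      relative_net (containing r Y) (\<beta> - \<delta>) (child r) \<and> card (child r) \<le> (B + 1) ^ n" ..
  have "finite R"
    using R(1) finite_vertices finite_subset by blast
  have "card R \<le> B"
    using R(1) by (intro bound[OF _ R(2)]) blast
  have "relative_net Y \<beta> (insert J0 (\<Union>r\<in>R. child r))"
    using J0 \<open>finite R\<close> represent child by (intro relative_net_insert_children) auto
  moreover have "card (insert J0 (\<Union>r\<in>R. child r)) \<le> (B + 1) ^ Suc n"
    using \<open>finite R\<close> \<open>card R \<le> B\<close> child
    by (intro card_insert_UN_le_pow) (auto simp: relative_net_def)
  ultimately show ?case
    by blast
qed

lemma exists_separating_sample:
  assumes R: "finite R" "2 \<le> card R" and \<delta>: "0 < \<delta>" "\<delta> \<le> 1" and sep: "separated \<delta> Y R"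
  obtains P where "P \<subseteq> {J. \<mu> J \<noteq> 0}" "real (card P) \<le> 2 * ln (card R) / \<delta> + 1"
    "\<And>r r'. r \<in> R \<Longrightarrow> r' \<in> R \<Longrightarrow> r \<noteq> r' \<Longrightarrow> \<exists>p\<in>P. (r \<in> p) \<noteq> (r' \<in> p)"
proof -
  let ?M = "card R"
  define I where "I = {(r, r'). r \<in> R \<and> r' \<in> R \<and> r \<noteq> r'}"
  define D where "D = (\<lambda>(r, r'). (containing r Y - containing r' Y) \<union> (containing r' Y - containing r Y))"
  define k where "k = nat \<lceil>2 * ln ?M / \<delta>\<rceil>"
  have "0 \<le> 2 * ln ?M / \<delta>"
    using R(2) \<delta> by simp
  then have "2 * ln ?M / \<delta> \<le> k" "real k \<le> 2 * ln ?M / \<delta> + 1"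
    unfolding k_def by linarith+
  then have k: "2 * ln ?M \<le> k * \<delta>" "real k \<le> 2 * ln ?M / \<delta> + 1"
    using \<delta> by (simp_all add: pos_divide_le_eq)
  have "R \<noteq> {}"
    using R(2) by auto
  then obtain r0 where "r0 \<in> R"
    by blast
  then have "I \<subset> R \<times> R"
    by (auto simp: I_def)
  then have "card I < ?M\<^sup>2"
    using R(1) psubset_card_mono[of "R \<times> R" I] by (simp add: card_cartesian_product power2_eq_square)
  have "card I * (1 - \<delta>) ^ k \<le> card I * (1 / ?M\<^sup>2)"
    using one_sub_pow_le_inverse_square[of \<delta> ?M k] \<delta> k(1) R(2) by (intro mult_left_mono) auto
  also have "\<dots> < 1"
    using \<open>card I < ?M\<^sup>2\<close> R(2) by (simp add: divide_less_eq)
  finally have "card I * (1 - \<delta>) ^ k < 1" .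
  moreover have "finite I"
    using \<open>I \<subset> R \<times> R\<close> R(1) by (blast intro: finite_subset)
  moreover have "\<forall>i\<in>I. \<delta> < meas \<mu> (D i)"
    using sep by (auto simp: I_def D_def separated_def)
  ultimately have "\<exists>P \<subseteq> {J. \<mu> J \<noteq> 0}. card P \<le> k \<and> (\<forall>i\<in>I. P \<inter> D i \<noteq> {})"
    using greedy_hitting_set[OF prob, of \<delta> I D k] \<delta> by simp
  then obtain P where P: "P \<subseteq> {J. \<mu> J \<noteq> 0}" "card P \<le> k"
    and hit: "\<forall>i\<in>I. P \<inter> D i \<noteq> {}"
    by (elim exE conjE) blast
  show ?thesis
  proof (rule that[OF P(1)])
    show "real (card P) \<le> 2 * ln ?M / \<delta> + 1"
      using P(2) k(2) by linarith
    fix r r' assume "r \<in> R" "r' \<in> R" "r \<noteq> r'"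
    then have "P \<inter> D (r, r') \<noteq> {}"
      using hit by (simp add: I_def)
    then obtain p where "p \<in> P" "p \<in> D (r, r')"
      by blast
    then show "\<exists>p\<in>P. (r \<in> p) \<noteq> (r' \<in> p)"
      by (auto simp: D_def containing_def)
  qed
qed

text \<open>The traces \<open>{J \<in> P. r \<in> J}\<close> of \<open>R\<close> on a separating sample \<open>P\<close> are distinct and, by
  \<open>not_shatters_traces\<close>, shatter no set of size \<open>nu_bi V E + 2\<close>; Sauer--Shelah bounds
  their number.\<close>
lemma card_separated_le:
  assumes \<nu>: "1 \<le> nu_bi V E" and R: "R \<subseteq> V" and \<delta>: "0 < \<delta>" "\<delta> \<le> 1/2"
    and sep: "separated \<delta> Y R"
  shows "card R \<le> (5 / \<delta>) ^ (2 * (nu_bi V E + 1))"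
proof (cases "card R \<le> 1")
  case True
  moreover have "1 \<le> (5 / \<delta>) ^ (2 * (nu_bi V E + 1))"
    using \<delta> by (intro one_le_power) simp
  ultimately show ?thesis
    by linarith
next
  case False
  let ?d = "nu_bi V E + 1"
  have "finite R"
    using R finite_vertices finite_subset by blast
  have M: "2 \<le> card R"
    using False by simp
  obtain P where P: "P \<subseteq> {J. \<mu> J \<noteq> 0}" "real (card P) \<le> 2 * ln (card R) / \<delta> + 1"
    and separates: "\<And>r r'. r \<in> R \<Longrightarrow> r' \<in> R \<Longrightarrow> r \<noteq> r' \<Longrightarrow> \<exists>p\<in>P. (r \<in> p) \<noteq> (r' \<in> p)"
    using exists_separating_sample[OF \<open>finite R\<close> M \<delta>(1) _ sep] \<delta>(2) by auto
  have "finite P" "P \<subseteq> MIS V E"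
    using P(1) finite_support support_MIS finite_subset by blast+
  define trace where "trace r = {J\<in>P. r \<in> J}" for r
  have "inj_on trace R"
  proof (rule inj_onI, rule ccontr)
    fix r r' assume "r \<in> R" "r' \<in> R" "trace r = trace r'" "r \<noteq> r'"
    then obtain p where "p \<in> P" "(r \<in> p) \<noteq> (r' \<in> p)"
      using separates by blast
    with \<open>trace r = trace r'\<close> show False
      by (auto simp: trace_def)
  qed
  then have "card R = card (trace ` R)"
    by (simp add: card_image)
  also have "\<dots> \<le> (\<Sum>i\<le>?d. card P choose i)"
  proof (rule sauer_shelah[OF \<open>finite P\<close>])
    show "trace ` R \<subseteq> Pow P"
      by (auto simp: trace_def)
    show "\<not> shatters (trace ` R) Q" if "Q \<subseteq> P" "card Q = Suc ?d" for Q
      using not_shatters_traces[OF \<open>P \<subseteq> MIS V E\<close> \<open>finite P\<close> \<nu> that(1)] that(2)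
      by (simp add: trace_def)
  qed
  finally have "card R \<le> (\<Sum>i\<le>?d. card P choose i)" .
  from packing_numeric[OF \<delta> _ M P(2) this] show ?thesis
    by simp
qed

lemma weak_eps_net_if_relative_net:
  assumes "relative_net (MIS V E) \<epsilon> N"
  shows "weak_eps_net (MIS V E) (convex_space V E) \<mu> \<epsilon> N"
  unfolding weak_eps_net_def
proof (intro conjI ballI impI)
  show "N \<subseteq> MIS V E"
    using assms by (simp add: relative_net_def)
  fix C assume "C \<in> convex_space V E" "\<epsilon> \<le> meas \<mu> C"
  then obtain S where "S \<subseteq> V" "C = Kset V E S"
    by (auto simp: convex_space_def)
  moreover have "Kset V E S \<inter> MIS V E = Kset V E S"
    using Kset_subset_MIS by blast
  ultimately show "N \<inter> C \<noteq> {}"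
    using assms \<open>\<epsilon> \<le> meas \<mu> C\<close> by (auto simp: relative_net_def)
qed

lemma weak_eps_net_large_eps:
  assumes "1/2 < \<epsilon>" "\<epsilon> \<le> 1"
  shows "\<exists>N. finite N \<and> real (card N) \<le> (480 / \<epsilon>) powr (8 * real (nu_bi V E) * ln (1 / \<epsilon>)) \<and>
    weak_eps_net (MIS V E) (convex_space V E) \<mu> \<epsilon> N"
proof -
  have "meas \<mu> (MIS V E) < 2 * \<epsilon>"
    using fin_prob_meas_eq_1[OF prob] assms by simp
  then obtain J where "relative_net (MIS V E) \<epsilon> {J}"
    using relative_net_majority[OF subset_refl] by blast
  moreover have "1 \<le> (480 / \<epsilon>) powr (8 * real (nu_bi V E) * ln (1 / \<epsilon>))"
    using assms by (intro ge_one_powr_ge_zero mult_nonneg_nonneg) (auto simp: field_simps)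
  ultimately show ?thesis
    using weak_eps_net_if_relative_net by (intro exI[of _ "{J}"]) auto
qed

lemma weak_eps_net_if_nu_bi_eq_0:
  assumes "nu_bi V E = 0" "0 < \<epsilon>"
  shows "\<exists>N. finite N \<and> real (card N) \<le> (480 / \<epsilon>) powr (8 * real (nu_bi V E) * ln (1 / \<epsilon>)) \<and>
    weak_eps_net (MIS V E) (convex_space V E) \<mu> \<epsilon> N"
proof (intro exI[of _ "{V}"] conjI)
  show "real (card {V}) \<le> (480 / \<epsilon>) powr (8 * real (nu_bi V E) * ln (1 / \<epsilon>))"
    using assms by simp
  show "weak_eps_net (MIS V E) (convex_space V E) \<mu> \<epsilon> {V}"
    unfolding weak_eps_net_def
  proof (intro conjI ballI impI)
    show "{V} \<subseteq> MIS V E"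
      using nu_bi_eq_0_imp_MIS_eq[OF assms(1)] by simp
    fix C assume "C \<in> convex_space V E" "\<epsilon> \<le> meas \<mu> C"
    then have "C \<subseteq> MIS V E" "C \<noteq> {}"
      using assms(2) Kset_subset_MIS by (auto simp: convex_space_def meas_def)
    then show "{V} \<inter> C \<noteq> {}"
      using nu_bi_eq_0_imp_MIS_eq[OF assms(1)] by auto
  qed
qed simp

text \<open>The tree has depth \<open>m\<close> with \<open>1 / \<epsilon> < 2 ^ m\<close>, and loses \<open>\<delta> = \<epsilon> / (2 m)\<close> per level.\<close>
lemma weak_eps_net_small_eps:
  assumes \<nu>: "1 \<le> nu_bi V E" and \<epsilon>: "0 < \<epsilon>" "\<epsilon> \<le> 1/2"
  shows "\<exists>N. finite N \<and> real (card N) \<le> (480 / \<epsilon>) powr (8 * real (nu_bi V E) * ln (1 / \<epsilon>)) \<and>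
    weak_eps_net (MIS V E) (convex_space V E) \<mu> \<epsilon> N"
proof -
  have "2 \<le> 1 / \<epsilon>"
    using \<epsilon> by (simp add: field_simps)
  then obtain m where m: "2 \<le> m" "2 ^ (m - 1) \<le> 1 / \<epsilon>" "1 / \<epsilon> < 2 ^ m"
    using exists_pow2_bracket[of "1 / \<epsilon>"] by blast
  define \<delta> where "\<delta> = \<epsilon> / (2 * real m)"
  define B where "B = nat \<lfloor>(5 / \<delta>) ^ (2 * (nu_bi V E + 1))\<rfloor>"
  have \<delta>: "0 < \<delta>" "\<delta> \<le> 1/2"
    using \<epsilon> m by (auto simp: \<delta>_def field_simps)
  have "card R \<le> B" if "R \<subseteq> V" "separated \<delta> Y R" for Y R
    using card_separated_le[OF \<nu> that(1) \<delta> that(2)] by (simp add: B_def le_nat_floor)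
  moreover have "meas \<mu> (MIS V E) < 2 ^ Suc m * (\<epsilon> - m * \<delta>)"
    using m \<epsilon> fin_prob_meas_eq_1[OF prob] by (simp add: \<delta>_def field_simps)
  ultimately have "\<exists>N. relative_net (MIS V E) \<epsilon> N \<and> card N \<le> (B + 1) ^ m"
    using exists_relative_net[of \<delta> B "MIS V E" m \<epsilon>] \<delta> by simp
  then obtain N where N: "relative_net (MIS V E) \<epsilon> N" "card N \<le> (B + 1) ^ m"
    by blast
  have "real (card N) \<le> real ((B + 1) ^ m)"
    using N(2) by (simp only: of_nat_le_iff)
  also have "\<dots> = (real B + 1) ^ m"
    by (simp add: add.commute)
  also have "\<dots> \<le> ((5 / \<delta>) ^ (2 * (nu_bi V E + 1)) + 1) ^ m"
    using \<delta> of_nat_floor[of "(5 / \<delta>) ^ (2 * (nu_bi V E + 1))"] by (intro power_mono) (auto simp: B_def)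
  also have "\<dots> \<le> (480 / \<epsilon>) powr (8 * real (nu_bi V E) * ln (1 / \<epsilon>))"
    by (rule net_size_numeric[OF \<nu> m(1) \<epsilon>(1) m(2) \<delta>_def])
  finally show ?thesis
    using N(1) weak_eps_net_if_relative_net by (auto simp: relative_net_def)
qed

end

theorem theorem2p28:
  fixes V :: "'a set" and E :: "'a \<Rightarrow> 'a \<Rightarrow> bool" and \<epsilon> :: real
  assumes "finite_graph V E" and "\<epsilon> > 0"
  shows "has_weak_eps_nets (MIS V E) (convex_space V E) \<epsilon>
           ((480 / \<epsilon>) powr (8 * real (nu_bi V E) * ln (1 / \<epsilon>)))"
  unfolding has_weak_eps_nets_def
proof (intro allI impI)
  fix \<mu> assume \<mu>: "fin_prob (MIS V E) \<mu>"
  interpret MIS_prob V E \<mu>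
    using assms(1) \<mu> by unfold_locales
  consider "1 < \<epsilon>" | "1/2 < \<epsilon>" "\<epsilon> \<le> 1" | "nu_bi V E = 0" "\<epsilon> \<le> 1/2"
    | "1 \<le> nu_bi V E" "\<epsilon> \<le> 1/2"
    by linarith
  then show "\<exists>N. finite N \<and> real (card N) \<le> (480 / \<epsilon>) powr (8 * real (nu_bi V E) * ln (1 / \<epsilon>))
      \<and> weak_eps_net (MIS V E) (convex_space V E) \<mu> \<epsilon> N"
  proof cases
    case 1
    then show ?thesis
      using weak_eps_net_empty[OF \<mu> 1] by (intro exI[of _ "{}"]) auto
  next
    case 2
    then show ?thesis
      by (rule weak_eps_net_large_eps)
  next
    case 3
    then show ?thesis
      using assms(2) by (intro weak_eps_net_if_nu_bi_eq_0)
  next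
    case 4
    then show ?thesis
      using assms(2) by (intro weak_eps_net_small_eps)
  qed
qed

end
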